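(* There exists a distributionally robust constrained MDP (finite $\mathcal{S}$, $\mathcal{A}$, discount $\gamma\in[0,1)$, $(s,a)$-rectangular uncertainty set $\mathcal{P}$, reward $r$, and a single constraint reward $g$) for which there is no consistency operator that, for every $\lambda_t\ge0$, simultaneously satisfies: (i) linearity; and (ii) $\gamma$-contraction to the target, i.e. for every policy $\pi\in\Pi$, $\mathcal{T}^\pi$ is a $\gamma$-contraction in $\|\cdot\|_\infty$ whose unique fixed point is $V^\pi_r - \lambda_t V^\pi_g$. (The operator may depend on $\lambda_t$.)
   Context: A distributionally robust constrained MDP consists of finite sets $\mathcal{S},\mathcal{A}$, $\gamma\in[0,1)$, an $(s,a)$-rectangular uncertainty set $\mathcal{P}=\otimes_{(s,a)}\mathcal{P}_{s,a}$ with $\mathcal{P}_{s,a}\subseteq\Delta(\mathcal{S})$, reward $r:\mathcal{S}\times\mathcal{A}\to\mathbb{R}_{\ge0}$ and constraint reward $g:\mathcal{S}\times\mathcal{A}\to\mathbb{R}_{\ge0}$. $\Pi=\Delta(\mathcal{A})^{\mathcal{S}}$ is the set of stationary stochastic policies (including deterministic ones); $\pi[s,\cdot]\in\Delta(\mathcal{A})$. For a reward $u$, the robust value function is $V^\pi_u(s) = \min_{\mathcal{K}\in\otimes_{t\ge0}\mathcal{P}}\mathbb{E}_{\mathcal{K}}[\sum_{t\ge0}\gamma^t u(s_t,a_t)\mid s_0=s,\pi]$, the worst case over sequences of transition kernels from $\mathcal{P}$ (one per time step) with $a_t\sim\pi[s_t,\cdot]$. A consistency operator is a family of maps $\mathcal{T}^\pi:\mathbb{R}^{\mathcal{S}}\to\mathbb{R}^{\mathcal{S}}$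 indexed by $\pi\in\Pi$. It is linear if there is $f:\mathbb{R}^{\mathcal{S}}\to\mathbb{R}^{\mathcal{S}\times\mathcal{A}}$, independent of $\pi$, with $[\mathcal{T}^\pi v](s) = \langle\pi[s,\cdot], f(v)[s,\cdot]\rangle$ for all $\pi, v, s$. *)

theory Defs
  imports Complex_Main
begin

(* States and actions are encoded as natural numbers, with explicit finite
   carriers S and A. Functions on S (resp. S x A) are functions on nat whose
   values outside the carrier are irrelevant. *)

definition distr :: "nat set \<Rightarrow> (nat \<Rightarrow> real) \<Rightarrow> bool" where
  "distr X p \<longleftrightarrow> (\<forall>x\<in>X. p x \<ge> 0) \<and> (\<Sum>x\<in>X. p x) = 1"

definition is_policy :: "nat set \<Rightarrow> nat set \<Rightarrow> (nat \<Rightarrow> nat \<Rightarrow> real) \<Rightarrow> bool" where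
  "is_policy S A \<pi> \<longleftrightarrow> (\<forall>s\<in>S. distr A (\<pi> s))"

primrec occ :: "nat set \<Rightarrow> nat set \<Rightarrow> (nat \<Rightarrow> nat \<Rightarrow> nat \<Rightarrow> nat \<Rightarrow> real)
    \<Rightarrow> (nat \<Rightarrow> nat \<Rightarrow> real) \<Rightarrow> nat \<Rightarrow> nat \<Rightarrow> nat \<Rightarrow> real" where
  "occ S A K \<pi> s0 0 = (\<lambda>s. if s = s0 then 1 else 0)"
| "occ S A K \<pi> s0 (Suc t) =
     (\<lambda>s'. \<Sum>s\<in>S. occ S A K \<pi> s0 t s * (\<Sum>a\<in>A. \<pi> s a * K t s a s'))"

definition disc_return :: "nat set \<Rightarrow> nat set \<Rightarrow> real \<Rightarrow> (nat \<Rightarrow> nat \<Rightarrow> nat \<Rightarrow> nat \<Rightarrow> real)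
    \<Rightarrow> (nat \<Rightarrow> nat \<Rightarrow> real) \<Rightarrow> (nat \<Rightarrow> nat \<Rightarrow> real) \<Rightarrow> nat \<Rightarrow> real" where
  "disc_return S A \<gamma> K \<pi> u s0 =
     (\<Sum>t. \<gamma> ^ t * (\<Sum>s\<in>S. occ S A K \<pi> s0 t s * (\<Sum>a\<in>A. \<pi> s a * u s a)))"

definition adm_kernels :: "nat set \<Rightarrow> nat set \<Rightarrow> (nat \<Rightarrow> nat \<Rightarrow> (nat \<Rightarrow> real) set)
    \<Rightarrow> (nat \<Rightarrow> nat \<Rightarrow> nat \<Rightarrow> nat \<Rightarrow> real) set" where
  "adm_kernels S A P = {K. \<forall>t. \<forall>s\<in>S. \<forall>a\<in>A. K t s a \<in> P s a}"

definition robust_value :: "nat set \<Rightarrow> nat set \<Rightarrow> real \<Rightarrow> (nat \<Rightarrow> nat \<Rightarrow> (nat \<Rightarrow> real) set)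
    \<Rightarrow> (nat \<Rightarrow> nat \<Rightarrow> real) \<Rightarrow> (nat \<Rightarrow> nat \<Rightarrow> real) \<Rightarrow> nat \<Rightarrow> real" where
  "robust_value S A \<gamma> P \<pi> u s0 =
     (INF K \<in> adm_kernels S A P. disc_return S A \<gamma> K \<pi> u s0)"

definition supnorm :: "nat set \<Rightarrow> (nat \<Rightarrow> real) \<Rightarrow> real" where
  "supnorm S v = Max ((\<lambda>s. \<bar>v s\<bar>) ` S)"

definition linear_consistency :: "nat set \<Rightarrow> nat set
    \<Rightarrow> ((nat \<Rightarrow> nat \<Rightarrow> real) \<Rightarrow> (nat \<Rightarrow> real) \<Rightarrow> (nat \<Rightarrow> real)) \<Rightarrow> bool" where
  "linear_consistency S A T \<longleftrightarrow>
     (\<exists>f :: (nat \<Rightarrow> real) \<Rightarrow> nat \<Rightarrow> nat \<Rightarrow> real.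
        \<forall>\<pi> v s. is_policy S A \<pi> \<longrightarrow> s \<in> S \<longrightarrow> T \<pi> v s = (\<Sum>a\<in>A. \<pi> s a * f v s a))"

definition contraction_to :: "nat set \<Rightarrow> nat set \<Rightarrow> real
    \<Rightarrow> ((nat \<Rightarrow> nat \<Rightarrow> real) \<Rightarrow> (nat \<Rightarrow> real) \<Rightarrow> (nat \<Rightarrow> real))
    \<Rightarrow> ((nat \<Rightarrow> nat \<Rightarrow> real) \<Rightarrow> nat \<Rightarrow> real) \<Rightarrow> bool" where
  "contraction_to S A \<gamma> T V \<longleftrightarrow>
     (\<forall>\<pi>. is_policy S A \<pi> \<longrightarrow>
        (\<forall>v w. supnorm S (\<lambda>s. T \<pi> v s - T \<pi> w s) \<le> \<gamma> * supnorm S (\<lambda>s. v s - w s)) \<and>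
        (\<forall>s\<in>S. T \<pi> (V \<pi>) s = V \<pi> s) \<and>
        (\<forall>v. (\<forall>s\<in>S. T \<pi> v s = v s) \<longrightarrow> (\<forall>s\<in>S. v s = V \<pi> s)))"

end

theory Submission
  imports Defs
begin

(* In the counterexample, nature moves from the initial state 0 to state 1 or 2, and from there
   to an absorbing zero-reward state 3. Since the worst case is taken separately for r and g,
   the target V_r - V_g at state 0 is gamma times (min of the r-values at 1, 2) minus (min of the
   g-values at 1, 2), which is not determined by the actions taken at states 1 and 2 separately:
   there are policies pi1, pi2 with the same target while the policy pi3 acting like pi1 at
   state 1 and like pi2 at state 2 has a different one.
   A linear operator T^pi v (s) depends on pi only through pi(s), and a contraction depends on v
   only through its values on S; so the common target of pi1 and pi2 is a fixed point of T^pi3,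
   contradicting uniqueness of the fixed point of T^pi3. *)

lemma linear_consistency_local:
  assumes "linear_consistency S A T" "is_policy S A \<pi>" "is_policy S A \<pi>'"
    and "s \<in> S" "\<pi> s = \<pi>' s"
  shows "T \<pi> v s = T \<pi>' v s"
  using assms unfolding linear_consistency_def by metis

lemma contraction_to_congruent:
  assumes "contraction_to S A \<gamma> T V" "finite S" "is_policy S A \<pi>"
    and "\<forall>s\<in>S. v s = w s" "s \<in> S"
  shows "T \<pi> v s = T \<pi> w s"
proof -
  have "(\<lambda>s. \<bar>v s - w s\<bar>) ` S = {0}"
    using assms(4,5) by auto
  then have "supnorm S (\<lambda>s. v s - w s) = 0"
    by (simp add: supnorm_def)
  moreover have "\<bar>T \<pi> v s - T \<pi> w s\<bar> \<le> supnorm S (\<lambda>s. T \<pi> v s - T \<pi> w s)"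
    unfolding supnorm_def using assms(2,5) by auto
  moreover have "supnorm S (\<lambda>s. T \<pi> v s - T \<pi> w s) \<le> \<gamma> * supnorm S (\<lambda>s. v s - w s)"
    using assms(1,3) unfolding contraction_to_def by blast
  ultimately show ?thesis
    by simp
qed

lemma linear_consistency_splice_fixed_point:
  assumes lin: "linear_consistency S A T" and con: "contraction_to S A \<gamma> T V"
    and "finite S"
    and pol: "is_policy S A \<pi>\<^sub>1" "is_policy S A \<pi>\<^sub>2" "is_policy S A \<pi>"
    and splice: "\<forall>s\<in>S. \<pi> s = \<pi>\<^sub>1 s \<or> \<pi> s = \<pi>\<^sub>2 s"
    and agree: "\<forall>s\<in>S. V \<pi>\<^sub>1 s = V \<pi>\<^sub>2 s"
  shows "\<forall>s\<in>S. V \<pi> s = V \<pi>\<^sub>1 s"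
proof -
  have fixed: "\<forall>s\<in>S. T \<pi>' (V \<pi>') s = V \<pi>' s"
    and unique: "\<And>v. \<forall>s\<in>S. T \<pi>' v s = v s \<Longrightarrow> \<forall>s\<in>S. v s = V \<pi>' s"
    if "is_policy S A \<pi>'" for \<pi>'
    using con that unfolding contraction_to_def by blast+
  have "T \<pi> (V \<pi>\<^sub>1) s = V \<pi>\<^sub>1 s" if s: "s \<in> S" for s
  proof -
    from splice s consider "\<pi> s = \<pi>\<^sub>1 s" | "\<pi> s = \<pi>\<^sub>2 s"
      by blast
    then show ?thesis
    proof cases
      assume "\<pi> s = \<pi>\<^sub>1 s"
      then have "T \<pi> (V \<pi>\<^sub>1) s = T \<pi>\<^sub>1 (V \<pi>\<^sub>1) s"
        using linear_consistency_local[OF lin pol(3,1) s] by blast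
      then show ?thesis
        using fixed[OF pol(1)] s by simp
    next
      assume "\<pi> s = \<pi>\<^sub>2 s"
      then have "T \<pi> (V \<pi>\<^sub>1) s = T \<pi>\<^sub>2 (V \<pi>\<^sub>1) s"
        using linear_consistency_local[OF lin pol(3,2) s] by blast
      also have "\<dots> = T \<pi>\<^sub>2 (V \<pi>\<^sub>2) s"
        using contraction_to_congruent[OF con \<open>finite S\<close> pol(2) agree s] .
      finally show ?thesis
        using fixed[OF pol(2)] agree s by simp
    qed
  qed
  then show ?thesis
    using unique[OF pol(3), of "V \<pi>\<^sub>1"] by auto
qed

definition point_mass :: "nat \<Rightarrow> nat \<Rightarrow> real" where
  "point_mass k x = (if x = k then 1 else 0)"

definition deterministic_policy :: "(nat \<Rightarrow> nat) \<Rightarrow> nat \<Rightarrow> nat \<Rightarrow> real" where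
  "deterministic_policy d s = point_mass (d s)"

definition policy_reward :: "nat set \<Rightarrow> (nat \<Rightarrow> nat \<Rightarrow> real) \<Rightarrow> (nat \<Rightarrow> nat \<Rightarrow> real) \<Rightarrow> nat \<Rightarrow> real"
  where "policy_reward A \<pi> u s = (\<Sum>a\<in>A. \<pi> s a * u s a)"

lemma sum_point_mass_mult:
  assumes "finite X" "k \<in> X"
  shows "(\<Sum>x\<in>X. point_mass k x * F x) = F k"
  using assms by (simp add: point_mass_def if_distrib[of "\<lambda>c. c * F _"] cong: if_cong)

lemma distr_point_mass: "finite X \<Longrightarrow> k \<in> X \<Longrightarrow> distr X (point_mass k)"
  using sum_point_mass_mult[of X k "\<lambda>_. 1"] by (simp add: distr_def point_mass_def)

lemma is_policy_deterministic:
  "finite A \<Longrightarrow> \<forall>s\<in>S. d s \<in> A \<Longrightarrow> is_policy S A (deterministic_policy d)"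
  by (simp add: is_policy_def deterministic_policy_def distr_point_mass)

lemma policy_reward_deterministic:
  "finite A \<Longrightarrow> d s \<in> A \<Longrightarrow> policy_reward A (deterministic_policy d) u s = u s (d s)"
  by (simp add: policy_reward_def deterministic_policy_def sum_point_mass_mult)

lemma policy_sum_eq_1: "is_policy S A \<pi> \<Longrightarrow> s \<in> S \<Longrightarrow> (\<Sum>a\<in>A. \<pi> s a) = 1"
  by (simp add: is_policy_def distr_def)

lemma policy_average_const:
  "is_policy S A \<pi> \<Longrightarrow> s \<in> S \<Longrightarrow> (\<Sum>a\<in>A. \<pi> s a * c) = c"
  by (simp add: policy_sum_eq_1 flip: sum_distrib_right)

lemma policy_average_lower_bound:
  assumes "is_policy S A \<pi>" "s \<in> S" "\<And>a. a \<in> A \<Longrightarrow> m \<le> c a"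
  shows "m \<le> (\<Sum>a\<in>A. \<pi> s a * c a)"
proof -
  have "m = (\<Sum>a\<in>A. \<pi> s a * m)"
    using policy_average_const[OF assms(1,2)] by simp
  also have "\<dots> \<le> (\<Sum>a\<in>A. \<pi> s a * c a)"
    using assms unfolding is_policy_def distr_def by (intro sum_mono mult_left_mono) auto
  finally show ?thesis .
qed

lemma sum_occ_0_mult:
  "finite S \<Longrightarrow> s\<^sub>0 \<in> S \<Longrightarrow> (\<Sum>s\<in>S. occ S A K \<pi> s\<^sub>0 0 s * F s) = F s\<^sub>0"
  using sum_point_mass_mult[of S s\<^sub>0 F] by (simp add: point_mass_def)

lemma occ_Suc_0:
  "finite S \<Longrightarrow> s\<^sub>0 \<in> S \<Longrightarrow> occ S A K \<pi> s\<^sub>0 (Suc 0) s = (\<Sum>a\<in>A. \<pi> s\<^sub>0 a * K 0 s\<^sub>0 a s)"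
  using sum_point_mass_mult[of S s\<^sub>0] by (simp add: point_mass_def)

definition ex_states :: "nat set" where
  "ex_states = {0, 1, 2, 3}"

definition ex_actions :: "nat set" where
  "ex_actions = {0, 1}"

definition ex_uncertainty :: "nat \<Rightarrow> nat \<Rightarrow> (nat \<Rightarrow> real) set" where
  "ex_uncertainty s a = (if s = 0 then {point_mass 1, point_mass 2} else {point_mass 3})"

definition ex_reward :: "nat \<Rightarrow> nat \<Rightarrow> real" where
  "ex_reward s a =
     (if s = 1 then (if a = 0 then 1 else 0) else if s = 2 then (if a = 0 then 1 else 2) else 0)"

definition ex_constraint_reward :: "nat \<Rightarrow> nat \<Rightarrow> real" where
  "ex_constraint_reward s a =
     (if s = 1 then (if a = 0 then 1 else 0) else if s = 2 then (if a = 0 then 0 else 1) else 0)"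

abbreviation ex_kernels :: "(nat \<Rightarrow> nat \<Rightarrow> nat \<Rightarrow> nat \<Rightarrow> real) set" where
  "ex_kernels \<equiv> adm_kernels ex_states ex_actions ex_uncertainty"

abbreviation ex_occ :: "(nat \<Rightarrow> nat \<Rightarrow> nat \<Rightarrow> nat \<Rightarrow> real) \<Rightarrow> (nat \<Rightarrow> nat \<Rightarrow> real)
    \<Rightarrow> nat \<Rightarrow> nat \<Rightarrow> nat \<Rightarrow> real" where
  "ex_occ \<equiv> occ ex_states ex_actions"

lemma ex_states_finite [simp]: "finite ex_states"
  by (simp add: ex_states_def)

lemma ex_kernel_initial:
  "K \<in> ex_kernels \<Longrightarrow> a \<in> ex_actions \<Longrightarrow> K t 0 a = point_mass 1 \<or> K t 0 a = point_mass 2"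
  by (simp add: adm_kernels_def ex_states_def ex_uncertainty_def)

lemma ex_kernel_absorbing:
  "K \<in> ex_kernels \<Longrightarrow> s \<in> ex_states \<Longrightarrow> s \<noteq> 0 \<Longrightarrow> a \<in> ex_actions \<Longrightarrow> K t s a = point_mass 3"
  by (force simp: adm_kernels_def ex_uncertainty_def)

lemma ex_occ_Suc_initial:
  assumes "K \<in> ex_kernels"
  shows "ex_occ K \<pi> s\<^sub>0 (Suc t) 0 = 0"
proof -
  have "K t s a 0 = 0" if "s \<in> ex_states" "a \<in> ex_actions" for s a
  proof (cases "s = 0")
    case True
    then show ?thesis
      using ex_kernel_initial[OF assms that(2), of t] by (auto simp: point_mass_def)
  next
    case False
    then show ?thesis
      using ex_kernel_absorbing[OF assms that(1) False that(2)] by (simp add: point_mass_def)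
  qed
  then show ?thesis
    by simp
qed

lemma ex_occ_absorbed:
  assumes "K \<in> ex_kernels" "s \<noteq> 3"
  shows "ex_occ K \<pi> s\<^sub>0 (Suc (Suc t)) s = 0"
proof -
  have "\<forall>s'\<in>ex_states. ex_occ K \<pi> s\<^sub>0 (Suc t) s' * (\<Sum>a\<in>ex_actions. \<pi> s' a * K (Suc t) s' a s) = 0"
  proof (intro ballI)
    fix s' assume "s' \<in> ex_states"
    show "ex_occ K \<pi> s\<^sub>0 (Suc t) s' * (\<Sum>a\<in>ex_actions. \<pi> s' a * K (Suc t) s' a s) = 0"
    proof (cases "s' = 0")
      case True
      then show ?thesis
        using ex_occ_Suc_initial[OF assms(1)] by simp
    next
      case False
      then have "K (Suc t) s' a s = 0" if "a \<in> ex_actions" for a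
        using ex_kernel_absorbing[OF assms(1) \<open>s' \<in> ex_states\<close> False that] assms(2)
        by (simp add: point_mass_def)
      then show ?thesis
        by simp
    qed
  qed
  then show ?thesis
    unfolding occ.simps(2)[of _ _ _ _ _ "Suc t"] by (rule sum.neutral)
qed

lemma ex_disc_return_two_steps:
  fixes \<pi> :: "nat \<Rightarrow> nat \<Rightarrow> real"
  assumes "K \<in> ex_kernels" "s\<^sub>0 \<in> ex_states" "\<And>a. u 3 a = 0"
  defines "R \<equiv> policy_reward ex_actions \<pi> u"
  shows "disc_return ex_states ex_actions \<gamma> K \<pi> u s\<^sub>0 =
    R s\<^sub>0 + \<gamma> * (\<Sum>s\<in>ex_states. ex_occ K \<pi> s\<^sub>0 (Suc 0) s * R s)"
proof -
  have "(\<Sum>s\<in>ex_states. ex_occ K \<pi> s\<^sub>0 t s * R s) = 0" if "t \<ge> 2" for t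
  proof -
    obtain t' where t: "t = Suc (Suc t')"
      using \<open>t \<ge> 2\<close> by (metis add_2_eq_Suc le_Suc_ex)
    have "R 3 = 0"
      using assms(3) by (simp add: R_def policy_reward_def)
    then have "\<forall>s\<in>ex_states. ex_occ K \<pi> s\<^sub>0 t s * R s = 0"
      using ex_occ_absorbed[OF assms(1)] unfolding t by (metis mult_zero_left mult_zero_right)
    then show ?thesis
      by (rule sum.neutral)
  qed
  then have "disc_return ex_states ex_actions \<gamma> K \<pi> u s\<^sub>0 =
      (\<Sum>t<2. \<gamma> ^ t * (\<Sum>s\<in>ex_states. ex_occ K \<pi> s\<^sub>0 t s * R s))"
    unfolding disc_return_def R_def policy_reward_def
    by (intro suminf_finite) auto
  also have "\<dots> = R s\<^sub>0 + \<gamma> * (\<Sum>s\<in>ex_states. ex_occ K \<pi> s\<^sub>0 (Suc 0) s * R s)"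
    using sum_occ_0_mult[OF ex_states_finite assms(2)] by (simp add: numeral_2_eq_2)
  finally show ?thesis .
qed

lemma ex_disc_return_absorbing:
  fixes \<pi> :: "nat \<Rightarrow> nat \<Rightarrow> real"
  assumes "K \<in> ex_kernels" "is_policy ex_states ex_actions \<pi>"
    and "s\<^sub>0 \<in> ex_states" "s\<^sub>0 \<noteq> 0" "\<And>a. u 3 a = 0"
  shows "disc_return ex_states ex_actions \<gamma> K \<pi> u s\<^sub>0 = policy_reward ex_actions \<pi> u s\<^sub>0"
proof -
  have "ex_occ K \<pi> s\<^sub>0 (Suc 0) s = point_mass 3 s" for s
  proof -
    have "ex_occ K \<pi> s\<^sub>0 (Suc 0) s = (\<Sum>a\<in>ex_actions. \<pi> s\<^sub>0 a * point_mass 3 s)"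
      using occ_Suc_0[OF ex_states_finite assms(3)] ex_kernel_absorbing[OF assms(1,3,4)] by simp
    also have "\<dots> = point_mass 3 s"
      using policy_average_const[OF assms(2,3)] .
    finally show ?thesis .
  qed
  moreover have "policy_reward ex_actions \<pi> u 3 = 0"
    using assms(5) by (simp add: policy_reward_def)
  moreover have "(3::nat) \<in> ex_states"
    by (simp add: ex_states_def)
  ultimately show ?thesis
    using ex_disc_return_two_steps[where u = u, OF assms(1,3,5)]
      sum_point_mass_mult[OF ex_states_finite] by simp
qed

lemma ex_disc_return_initial:
  fixes \<pi> :: "nat \<Rightarrow> nat \<Rightarrow> real"
  assumes "K \<in> ex_kernels" "\<And>a. u 3 a = 0"
  defines "R \<equiv> policy_reward ex_actions \<pi> u"
  shows "disc_return ex_states ex_actions \<gamma> K \<pi> u 0 =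
    R 0 + \<gamma> * (\<Sum>a\<in>ex_actions. \<pi> 0 a * (\<Sum>s\<in>ex_states. K 0 0 a s * R s))"
proof -
  have "0 \<in> ex_states"
    by (simp add: ex_states_def)
  then have "(\<Sum>s\<in>ex_states. ex_occ K \<pi> 0 (Suc 0) s * R s) =
      (\<Sum>s\<in>ex_states. \<Sum>a\<in>ex_actions. \<pi> 0 a * K 0 0 a s * R s)"
    by (simp add: occ_Suc_0 sum_distrib_right del: occ.simps)
  also have "\<dots> = (\<Sum>a\<in>ex_actions. \<pi> 0 a * (\<Sum>s\<in>ex_states. K 0 0 a s * R s))"
    by (subst sum.swap) (simp add: sum_distrib_left mult.assoc)
  finally show ?thesis
    using ex_disc_return_two_steps[where u = u, OF assms(1) \<open>0 \<in> ex_states\<close> assms(2)]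
    by (simp add: R_def)
qed

definition ex_branch_kernel :: "nat \<Rightarrow> nat \<Rightarrow> nat \<Rightarrow> nat \<Rightarrow> nat \<Rightarrow> real" where
  "ex_branch_kernel k t s a = (if s = 0 then point_mass k else point_mass 3)"

lemma ex_branch_kernel_admissible: "k \<in> {1, 2} \<Longrightarrow> ex_branch_kernel k \<in> ex_kernels"
  by (auto simp: adm_kernels_def ex_branch_kernel_def ex_uncertainty_def)

lemma ex_robust_value_absorbing:
  assumes "is_policy ex_states ex_actions \<pi>" "s \<in> ex_states" "s \<noteq> 0" "\<And>a. u 3 a = 0"
  shows "robust_value ex_states ex_actions \<gamma> ex_uncertainty \<pi> u s = policy_reward ex_actions \<pi> u s"
proof -
  have "robust_value ex_states ex_actions \<gamma> ex_uncertainty \<pi> u s =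
      (INF K\<in>ex_kernels. policy_reward ex_actions \<pi> u s)"
    unfolding robust_value_def using ex_disc_return_absorbing assms by (intro INF_cong) auto
  also have "\<dots> = policy_reward ex_actions \<pi> u s"
    using ex_branch_kernel_admissible[of 1] by (intro cINF_const) auto
  finally show ?thesis .
qed

lemma ex_robust_value_initial:
  fixes \<pi> :: "nat \<Rightarrow> nat \<Rightarrow> real"
  assumes pol: "is_policy ex_states ex_actions \<pi>" and "0 \<le> \<gamma>" "\<And>a. u 3 a = 0"
  defines "R \<equiv> policy_reward ex_actions \<pi> u"
  shows "robust_value ex_states ex_actions \<gamma> ex_uncertainty \<pi> u 0 = R 0 + \<gamma> * min (R 1) (R 2)"
  unfolding robust_value_def
proof (rule cInf_eq_minimum)
  have "0 \<in> ex_states" "1 \<in> ex_states" "2 \<in> ex_states"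
    by (simp_all add: ex_states_def)
  define k :: nat where "k = (if R 1 \<le> R 2 then 1 else 2)"
  have k: "k \<in> {1, 2}" "k \<in> ex_states" "R k = min (R 1) (R 2)"
    by (auto simp: k_def ex_states_def)
  have "disc_return ex_states ex_actions \<gamma> (ex_branch_kernel k) \<pi> u 0 = R 0 + \<gamma> * R k"
    using ex_disc_return_initial[where u = u, OF ex_branch_kernel_admissible[OF k(1)] assms(3),
        of \<gamma> \<pi>] sum_point_mass_mult[OF ex_states_finite k(2)] policy_average_const[OF pol \<open>0 \<in> ex_states\<close>]
    by (simp add: R_def ex_branch_kernel_def)
  then show "R 0 + \<gamma> * min (R 1) (R 2) \<in>
      (\<lambda>K. disc_return ex_states ex_actions \<gamma> K \<pi> u 0) ` ex_kernels"
    using ex_branch_kernel_admissible[OF k(1)] k(3) by (metis image_eqI)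
  fix x
  assume "x \<in> (\<lambda>K. disc_return ex_states ex_actions \<gamma> K \<pi> u 0) ` ex_kernels"
  then obtain K where K: "K \<in> ex_kernels" and x: "x = disc_return ex_states ex_actions \<gamma> K \<pi> u 0"
    by blast
  have "min (R 1) (R 2) \<le> (\<Sum>s\<in>ex_states. K 0 0 a s * R s)" if "a \<in> ex_actions" for a
    using ex_kernel_initial[OF K that, of 0] sum_point_mass_mult[OF ex_states_finite]
      \<open>1 \<in> ex_states\<close> \<open>2 \<in> ex_states\<close> by auto
  then have "min (R 1) (R 2) \<le> (\<Sum>a\<in>ex_actions. \<pi> 0 a * (\<Sum>s\<in>ex_states. K 0 0 a s * R s))"
    by (rule policy_average_lower_bound[OF pol \<open>0 \<in> ex_states\<close>])
  then show "R 0 + \<gamma> * min (R 1) (R 2) \<le> x"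
    using ex_disc_return_initial[where u = u, OF K assms(3)] \<open>0 \<le> \<gamma>\<close> unfolding x R_def
    by (simp add: mult_left_mono)
qed

lemma ex_robust_value_deterministic:
  assumes "\<forall>s\<in>ex_states. d s \<in> ex_actions" "0 \<le> \<gamma>" "\<And>a. u 3 a = 0" "s \<in> ex_states"
  shows "robust_value ex_states ex_actions \<gamma> ex_uncertainty (deterministic_policy d) u s =
    (if s = 0 then u 0 (d 0) + \<gamma> * min (u 1 (d 1)) (u 2 (d 2)) else u s (d s))"
proof -
  have fin: "finite ex_actions"
    by (simp add: ex_actions_def)
  have pol: "is_policy ex_states ex_actions (deterministic_policy d)"
    using is_policy_deterministic[OF fin assms(1)] .
  have reward: "policy_reward ex_actions (deterministic_policy d) u s' = u s' (d s')"
    if "s' \<in> ex_states" for s'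
    using policy_reward_deterministic[OF fin] assms(1) that by blast
  show ?thesis
  proof (cases "s = 0")
    case True
    have "1 \<in> ex_states" "2 \<in> ex_states"
      by (simp_all add: ex_states_def)
    then show ?thesis
      using ex_robust_value_initial[where u = u, OF pol assms(2,3)] reward True assms(4) by simp
  next
    case False
    then show ?thesis
      using ex_robust_value_absorbing[where u = u, OF pol assms(4) False assms(3)] reward assms(4)
      by simp
  qed
qed

definition ex_target :: "real \<Rightarrow> (nat \<Rightarrow> nat \<Rightarrow> real) \<Rightarrow> nat \<Rightarrow> real" where
  "ex_target \<gamma> \<pi> s = robust_value ex_states ex_actions \<gamma> ex_uncertainty \<pi> ex_reward s -
    robust_value ex_states ex_actions \<gamma> ex_uncertainty \<pi> ex_constraint_reward s"

lemma ex_target_deterministic: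
  assumes "\<forall>s\<in>ex_states. d s \<in> ex_actions" "0 \<le> \<gamma>" "s \<in> ex_states"
  shows "ex_target \<gamma> (deterministic_policy d) s =
    (if s = 0 then \<gamma> * (min (ex_reward 1 (d 1)) (ex_reward 2 (d 2)) -
                        min (ex_constraint_reward 1 (d 1)) (ex_constraint_reward 2 (d 2)))
     else ex_reward s (d s) - ex_constraint_reward s (d s))"
proof -
  have "ex_reward 3 a = 0" "ex_constraint_reward 3 a = 0"
    "ex_reward 0 a = 0" "ex_constraint_reward 0 a = 0" for a
    by (simp_all add: ex_reward_def ex_constraint_reward_def)
  then show ?thesis
    using ex_robust_value_deterministic[OF assms(1,2), where u = ex_reward]
      ex_robust_value_deterministic[OF assms(1,2), where u = ex_constraint_reward] assms(3)
    by (simp add: ex_target_def right_diff_distrib)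
qed

definition ex_policy\<^sub>1 :: "nat \<Rightarrow> nat \<Rightarrow> real" where
  "ex_policy\<^sub>1 = deterministic_policy (\<lambda>s. if s = 2 then 1 else 0)"

definition ex_policy\<^sub>2 :: "nat \<Rightarrow> nat \<Rightarrow> real" where
  "ex_policy\<^sub>2 = deterministic_policy (\<lambda>s. if s = 1 then 1 else 0)"

definition ex_policy\<^sub>3 :: "nat \<Rightarrow> nat \<Rightarrow> real" where
  "ex_policy\<^sub>3 = deterministic_policy (\<lambda>s. 0)"

lemma ex_policies:
  "is_policy ex_states ex_actions ex_policy\<^sub>1"
  "is_policy ex_states ex_actions ex_policy\<^sub>2"
  "is_policy ex_states ex_actions ex_policy\<^sub>3"
  unfolding ex_policy\<^sub>1_def ex_policy\<^sub>2_def ex_policy\<^sub>3_def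
  by (simp_all add: is_policy_deterministic ex_actions_def)

lemma ex_policy\<^sub>3_splice:
  "\<forall>s\<in>ex_states. ex_policy\<^sub>3 s = ex_policy\<^sub>1 s \<or> ex_policy\<^sub>3 s = ex_policy\<^sub>2 s"
  by (simp add: ex_policy\<^sub>1_def ex_policy\<^sub>2_def ex_policy\<^sub>3_def deterministic_policy_def)

lemma ex_target_policy\<^sub>1:
  "0 \<le> \<gamma> \<Longrightarrow> s \<in> ex_states \<Longrightarrow> ex_target \<gamma> ex_policy\<^sub>1 s = (if s = 2 then 1 else 0)"
  unfolding ex_policy\<^sub>1_def
  by (subst ex_target_deterministic)
    (auto simp: ex_states_def ex_actions_def ex_reward_def ex_constraint_reward_def)

lemma ex_target_policy\<^sub>2:
  "0 \<le> \<gamma> \<Longrightarrow> s \<in> ex_states \<Longrightarrow> ex_target \<gamma> ex_policy\<^sub>2 s = (if s = 2 then 1 else 0)"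
  unfolding ex_policy\<^sub>2_def
  by (subst ex_target_deterministic)
    (auto simp: ex_states_def ex_actions_def ex_reward_def ex_constraint_reward_def)

lemma ex_target_policy\<^sub>3_initial: "0 \<le> \<gamma> \<Longrightarrow> ex_target \<gamma> ex_policy\<^sub>3 0 = \<gamma>"
  unfolding ex_policy\<^sub>3_def
  by (subst ex_target_deterministic)
    (auto simp: ex_states_def ex_actions_def ex_reward_def ex_constraint_reward_def)

lemma ex_no_linear_contraction:
  assumes "0 < \<gamma>"
  shows "\<not> (\<exists>T. linear_consistency ex_states ex_actions T \<and>
    contraction_to ex_states ex_actions \<gamma> T (ex_target \<gamma>))"
proof
  assume "\<exists>T. linear_consistency ex_states ex_actions T \<and>
    contraction_to ex_states ex_actions \<gamma> T (ex_target \<gamma>)"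
  then obtain T where lin: "linear_consistency ex_states ex_actions T"
    and con: "contraction_to ex_states ex_actions \<gamma> T (ex_target \<gamma>)"
    by blast
  have "\<forall>s\<in>ex_states. ex_target \<gamma> ex_policy\<^sub>1 s = ex_target \<gamma> ex_policy\<^sub>2 s"
    using assms by (simp add: ex_target_policy\<^sub>1 ex_target_policy\<^sub>2)
  then have "\<forall>s\<in>ex_states. ex_target \<gamma> ex_policy\<^sub>3 s = ex_target \<gamma> ex_policy\<^sub>1 s"
    by (rule linear_consistency_splice_fixed_point[OF lin con ex_states_finite ex_policies
          ex_policy\<^sub>3_splice])
  moreover have "0 \<in> ex_states"
    by (simp add: ex_states_def)
  ultimately show False
    using assms ex_target_policy\<^sub>1 ex_target_policy\<^sub>3_initial by force
qed

lemma ex_well_formed: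
  "finite ex_states" "ex_states \<noteq> {}" "finite ex_actions" "ex_actions \<noteq> {}"
  "\<forall>s\<in>ex_states. \<forall>a\<in>ex_actions. ex_uncertainty s a \<noteq> {} \<and>
     (\<forall>p\<in>ex_uncertainty s a. distr ex_states p)"
  "\<forall>s a. 0 \<le> ex_reward s a" "\<forall>s a. 0 \<le> ex_constraint_reward s a"
  by (auto simp: ex_states_def ex_actions_def ex_uncertainty_def ex_reward_def
      ex_constraint_reward_def intro!: distr_point_mass)

theorem theorem2:
  shows "\<exists>(S::nat set) (A::nat set) (\<gamma>::real) (P :: nat \<Rightarrow> nat \<Rightarrow> (nat \<Rightarrow> real) set)
            (r :: nat \<Rightarrow> nat \<Rightarrow> real) (g :: nat \<Rightarrow> nat \<Rightarrow> real).
     finite S \<and> S \<noteq> {} \<and> finite A \<and> A \<noteq> {} \<and> 0 \<le> \<gamma> \<and> \<gamma> < 1 \<and>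
     (\<forall>s\<in>S. \<forall>a\<in>A. P s a \<noteq> {} \<and> (\<forall>p\<in>P s a. distr S p)) \<and>
     (\<forall>s a. 0 \<le> r s a) \<and> (\<forall>s a. 0 \<le> g s a) \<and>
     \<not> (\<forall>lam::real. 0 \<le> lam \<longrightarrow>
          (\<exists>T. linear_consistency S A T \<and>
               contraction_to S A \<gamma> T
                 (\<lambda>\<pi> s. robust_value S A \<gamma> P \<pi> r s - lam * robust_value S A \<gamma> P \<pi> g s)))"
proof -
  let ?\<gamma> = "1 / 2 :: real"
  have "\<not> (\<forall>lam::real. 0 \<le> lam \<longrightarrow> (\<exists>T. linear_consistency ex_states ex_actions T \<and>
      contraction_to ex_states ex_actions ?\<gamma> T (\<lambda>\<pi> s.
        robust_value ex_states ex_actions ?\<gamma> ex_uncertainty \<pi> ex_reward s -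
        lam * robust_value ex_states ex_actions ?\<gamma> ex_uncertainty \<pi> ex_constraint_reward s)))"
    (is "\<not> (\<forall>lam. _ \<longrightarrow> ?consistent lam)")
  proof
    assume "\<forall>lam. 0 \<le> lam \<longrightarrow> ?consistent lam"
    from this[rule_format, of 1] show False
      using ex_no_linear_contraction[of ?\<gamma>] by (simp add: ex_target_def[abs_def])
  qed
  moreover have "0 \<le> ?\<gamma>" "?\<gamma> < 1"
    by simp_all
  ultimately show ?thesis
    using ex_well_formed by blast
qed

end
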